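(* There is a finite alphabet $\Sigma$ and a unary FO formula $\varphi(x\,;\,\bar y)$ over strings over $\Sigma$ such that there is no consistent formula learner for $\varphi$ (with local access to the string) whose running time is sublinear in the length of the string.
   Context: Strings as structures: a string $B=a_1\cdots a_n\in\Sigma^*$ is the finite structure with universe $U(B)=\{1,\ldots,n\}$ (its positions), the natural linear order $<$ on positions, and for each $a\in\Sigma$ a unary relation $R_a$ of the $a$-labelled positions (no successor relation in the signature). FO/MSO formulas are over the signature $\{<\}\cup\{R_a:a\in\Sigma\}$. A formula $\varphi(\bar x\,;\,\bar y)$ has instance variables $\bar x=(x_1,\ldots,x_k)$ ($k$ = arity; unary means $k=1$) and parameter variables $\bar y=(y_1,\ldots,y_\ell)$. For $\bar v\in U(B)^\ell$, $[\![\varphi(\bar x;\bar v)]\!]^B:U(B)^k\to\{0,1\}$ maps $\bar u$ to $1$ iff $B\models\varphi(\bar u;\bar v)$. A training set over $B$ is a finite $T\subseteq U(B)^k\times\{0,1\}$; $\bar v$ is consistent with $\varphi,B,T$ if $[\![\varphi(\bar x;\bar v)]\!]^B(\bar u)=\lambda$ for all $(\bar u,\lambda)\in T$; $T$ is $\varphi$-consistent if such $\bar v$ exists. Local access: a learner receives $T$ and initially holds only the positions occurring in $T$; it may query the label of a position it holds and retrieve the successor and predecessor of a position it holds; each operation costs one time step (uniform cost model). A consistent formula learner for $\varphi$ is a local-access algorithm for which there are numbers $q',\ell'$ such that on every string $B$ and every $\varphi$-consistent training set $T$ it outputs a formula $\varphi'(\bar x;\bar y')$ (of MSO, in particular possibly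 FO) of quantifier rank at most $q'$ with $|\bar y'|\le \ell'$, together with a tuple $\bar v'\in U(B)^{|\bar y'|}$ consistent with $\varphi',B,T$. Sublinear running time: for every fixed bound $t$ on the size of training sets there is a function $f_t$ with $f_t(n)/n\to 0$ such that the running time on every string of length $n$ and every training set of size at most $t$ is at most $f_t(n)$. *)

theory Defs
  imports Complex_Main
begin

text \<open>Strings over an alphabet of natural-number labels; a string w is the structure
with universe the positions 0..length w - 1 (0-based), the order <, and label predicates.\<close>

datatype form =
    Lab nat nat
  | Less nat nat
  | Eq nat nat
  | Mem nat nat
  | Neg form
  | Or form form
  | Ex1 nat form
  | Ex2 nat form

fun sat :: "nat list \<Rightarrow> (nat \<Rightarrow> nat) \<Rightarrow> (nat \<Rightarrow> nat set) \<Rightarrow> form \<Rightarrow> bool" where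
  "sat w I J (Lab a x) = (I x < length w \<and> w ! I x = a)"
| "sat w I J (Less x y) = (I x < I y)"
| "sat w I J (Eq x y) = (I x = I y)"
| "sat w I J (Mem x X) = (I x \<in> J X)"
| "sat w I J (Neg f) = (\<not> sat w I J f)"
| "sat w I J (Or f g) = (sat w I J f \<or> sat w I J g)"
| "sat w I J (Ex1 x f) = (\<exists>p < length w. sat w (I(x := p)) J f)"
| "sat w I J (Ex2 X f) = (\<exists>P \<subseteq> {0..<length w}. sat w I (J(X := P)) f)"

fun fv1 :: "form \<Rightarrow> nat set" where
  "fv1 (Lab a x) = {x}"
| "fv1 (Less x y) = {x, y}"
| "fv1 (Eq x y) = {x, y}"
| "fv1 (Mem x X) = {x}"
| "fv1 (Neg f) = fv1 f"
| "fv1 (Or f g) = fv1 f \<union> fv1 g"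
| "fv1 (Ex1 x f) = fv1 f - {x}"
| "fv1 (Ex2 X f) = fv1 f"

fun fv2 :: "form \<Rightarrow> nat set" where
  "fv2 (Mem x X) = {X}"
| "fv2 (Neg f) = fv2 f"
| "fv2 (Or f g) = fv2 f \<union> fv2 g"
| "fv2 (Ex1 x f) = fv2 f"
| "fv2 (Ex2 X f) = fv2 f - {X}"
| "fv2 _ = {}"

fun labels :: "form \<Rightarrow> nat set" where
  "labels (Lab a x) = {a}"
| "labels (Neg f) = labels f"
| "labels (Or f g) = labels f \<union> labels g"
| "labels (Ex1 x f) = labels f"
| "labels (Ex2 X f) = labels f"
| "labels _ = {}"

fun qr :: "form \<Rightarrow> nat" where
  "qr (Neg f) = qr f"
| "qr (Or f g) = max (qr f) (qr g)"
| "qr (Ex1 x f) = Suc (qr f)"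
| "qr (Ex2 X f) = Suc (qr f)"
| "qr _ = 0"

fun is_FO :: "form \<Rightarrow> bool" where
  "is_FO (Mem x X) = False"
| "is_FO (Ex2 X f) = False"
| "is_FO (Neg f) = is_FO f"
| "is_FO (Or f g) = (is_FO f \<and> is_FO g)"
| "is_FO (Ex1 x f) = is_FO f"
| "is_FO _ = True"

text \<open>A formula phi(x_1..x_k ; y_1..y_l): instance variables are 0..k-1, parameter
variables are k..k+l-1; no other free variables, no free set variables, labels in Sigma.\<close>
definition wf_param_formula :: "nat set \<Rightarrow> form \<Rightarrow> nat \<Rightarrow> nat \<Rightarrow> bool" where
  "wf_param_formula \<Sigma> f k l \<longleftrightarrow> fv1 f \<subseteq> {0..<k + l} \<and> fv2 f = {} \<and> labels f \<subseteq> \<Sigma>"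

definition holds :: "nat list \<Rightarrow> form \<Rightarrow> nat \<Rightarrow> nat list \<Rightarrow> nat list \<Rightarrow> bool" where
  "holds w f k us vs = sat w (\<lambda>i. if i < k then us ! i else vs ! (i - k)) (\<lambda>_. {}) f"

definition training_set :: "nat list \<Rightarrow> nat \<Rightarrow> (nat list \<times> bool) set \<Rightarrow> bool" where
  "training_set w k T \<longleftrightarrow> finite T \<and>
     (\<forall>(us, b) \<in> T. length us = k \<and> set us \<subseteq> {0..<length w})"

definition consistent :: "nat list \<Rightarrow> form \<Rightarrow> nat \<Rightarrow> nat list \<Rightarrow> (nat list \<times> bool) set \<Rightarrow> bool" where
  "consistent w f k vs T \<longleftrightarrow> (\<forall>(us, b) \<in> T. holds w f k us vs = b)"

definition phi_consistent :: "nat list \<Rightarrow> form \<Rightarrow> nat \<Rightarrow> nat \<Rightarrow> (nat list \<times> bool) set \<Rightarrow> bool" where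
  "phi_consistent w f k l T \<longleftrightarrow>
     (\<exists>vs. length vs = l \<and> set vs \<subseteq> {0..<length w} \<and> consistent w f k vs T)"

text \<open>The learner refers to positions only through handles: indices into the list of
positions it currently holds.  Initially it holds exactly the positions occurring in the
training set.  Each query (label, successor, predecessor) costs one step.\<close>

datatype action =
    QLabel nat | QSucc nat | QPred nat
  | Output form "nat list"     (* hypothesis formula and parameter handles *)

datatype answer = ALabel nat | APos "nat option" | AInvalid

definition handle_of :: "nat list \<Rightarrow> nat \<Rightarrow> nat" where
  "handle_of hs p = (LEAST j. j < length hs \<and> hs ! j = p)"

definition acquire :: "nat list \<Rightarrow> nat \<Rightarrow> nat list \<times> answer" where
  "acquire hs p = (if p \<in> set hs then (hs, APos (Some (handle_of hs p)))
                    else (hs @ [p], APos (Some (length hs))))"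

fun respond :: "nat list \<Rightarrow> nat list \<Rightarrow> action \<Rightarrow> nat list \<times> answer" where
  "respond w hs (QLabel i) =
     (if i < length hs then (hs, ALabel (w ! (hs ! i))) else (hs, AInvalid))"
| "respond w hs (QSucc i) =
     (if i < length hs then
        (if Suc (hs ! i) < length w then acquire hs (Suc (hs ! i)) else (hs, APos None))
      else (hs, AInvalid))"
| "respond w hs (QPred i) =
     (if i < length hs then
        (if 0 < hs ! i then acquire hs (hs ! i - 1) else (hs, APos None))
      else (hs, AInvalid))"
| "respond w hs (Output f vs) = (hs, AInvalid)"

type_synonym learner = "(nat list \<times> bool) list \<Rightarrow> answer list \<Rightarrow> action"

fun exec :: "nat list \<Rightarrow> learner \<Rightarrow> (nat list \<times> bool) list \<Rightarrow> nat \<Rightarrow> nat list \<Rightarrow> answer list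
             \<Rightarrow> (form \<times> nat list \<times> nat list) option" where
  "exec w L inp s hs hist =
     (case L inp hist of
        Output f hvs \<Rightarrow> Some (f, hvs, hs)
      | q \<Rightarrow> (case s of 0 \<Rightarrow> None
              | Suc s' \<Rightarrow> (let (hs', a) = respond w hs q in exec w L inp s' hs' (hist @ [a]))))"

definition init_held :: "(nat list \<times> bool) list \<Rightarrow> nat list" where
  "init_held ts = remdups (concat (map fst ts))"

definition encode :: "(nat list \<times> bool) list \<Rightarrow> (nat list \<times> bool) list" where
  "encode ts = map (\<lambda>(us, b). (map (handle_of (init_held ts)) us, b)) ts"

definition run :: "nat list \<Rightarrow> learner \<Rightarrow> (nat list \<times> bool) list \<Rightarrow> nat \<Rightarrow>
                   (form \<times> nat list \<times> nat list) option" where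
  "run w L ts s = exec w L (encode ts) s (init_held ts) []"

definition consistent_learner :: "nat set \<Rightarrow> form \<Rightarrow> nat \<Rightarrow> nat \<Rightarrow> learner \<Rightarrow> bool" where
  "consistent_learner \<Sigma> f k l L \<longleftrightarrow>
     (\<exists>q' l'. \<forall>w ts. set w \<subseteq> \<Sigma> \<longrightarrow> distinct ts \<longrightarrow> training_set w k (set ts) \<longrightarrow>
        phi_consistent w f k l (set ts) \<longrightarrow>
        (\<exists>s f' hvs hs. run w L ts s = Some (f', hvs, hs) \<and>
           set hvs \<subseteq> {..<length hs} \<and>
           qr f' \<le> q' \<and> length hvs \<le> l' \<and> wf_param_formula \<Sigma> f' k (length hvs) \<and>
           consistent w f' k (map ((!) hs) hvs) (set ts)))"

definition sublinear_learner :: "nat set \<Rightarrow> nat \<Rightarrow> learner \<Rightarrow> bool" where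
  "sublinear_learner \<Sigma> k L \<longleftrightarrow>
     (\<forall>t. \<exists>g :: nat \<Rightarrow> real. (\<lambda>n. g n / real n) \<longlonglongrightarrow> 0 \<and>
        (\<forall>w ts. set w \<subseteq> \<Sigma> \<longrightarrow> distinct ts \<longrightarrow> length ts \<le> t \<longrightarrow> training_set w k (set ts) \<longrightarrow>
           run w L ts (nat \<lfloor>g (length w)\<rfloor>) \<noteq> None))"

end

theory Submission
  imports Defs
begin

text \<open>Take the alphabet \<open>{0}\<close> and \<open>\<phi>(x; y) = x < y\<close>. The training set consists of \<open>m\<close>
positive examples followed by \<open>m\<close> negative ones on a blank string, each example in its own block.
Sublinearity yields a length \<open>n\<close> on which the learner halts within \<open>S\<close> steps although blocks
\<open>2S + 3\<close> apart fit into the string. In \<open>S\<close> steps the learner only sees offsets at most \<open>S\<close>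
around the examples, so on every placement keeping the blocks far enough apart it behaves
identically and outputs the same hypothesis \<open>\<psi>\<close>, whose parameters lie in fewer than \<open>m\<close> blocks;
hence some positive block and some negative block carry no parameter.
By Buchi's theorem \<open>\<psi>\<close> defines a regular language, so a long blank factor can be lengthened by a
multiple of the period without changing its two-sided contexts. Placing the two free blocks next to
each other at such a distance, the words for the two examples differ only by moving blanks from one
side of the marked letter to the other, so \<open>\<psi>\<close> cannot label them differently.\<close>

section \<open>Regular languages via two-sided contexts\<close>

definition contexts :: "'a list set \<Rightarrow> 'a list \<Rightarrow> 'a list \<Rightarrow> 'a list \<Rightarrow> bool" where
  "contexts L u = (\<lambda>x y. x @ u @ y \<in> L)"

text \<open>Regularity in the sense of Myhill and Nerode: the two-sided syntactic congruence has finite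
index.\<close>

definition regular :: "'a list set \<Rightarrow> bool" where
  "regular L \<longleftrightarrow> finite (range (contexts L))"

lemma regularI:
  assumes "finite (range \<alpha>)" and "\<And>u v. \<alpha> u = \<alpha> v \<Longrightarrow> contexts L u = contexts L v"
  shows "regular L"
proof -
  have "contexts L u \<in> (\<lambda>a. contexts L (inv \<alpha> a)) ` range \<alpha>" for u
  proof
    show "contexts L u = contexts L (inv \<alpha> (\<alpha> u))"
      using assms(2) by (metis f_inv_into_f rangeI)
  qed simp
  then have "range (contexts L) \<subseteq> (\<lambda>a. contexts L (inv \<alpha> a)) ` range \<alpha>"
    by blast
  then show ?thesis
    unfolding regular_def using assms(1) finite_subset by blast
qed

lemma regular_Compl:
  assumes "regular L"
  shows "regular (- L)"
proof -
  have "range (contexts (- L)) = (\<lambda>F x y. \<not> F x y) ` range (contexts L)"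
    by (auto simp: contexts_def)
  then show ?thesis
    using assms unfolding regular_def by simp
qed

lemma regular_Un:
  assumes "regular L1" and "regular L2"
  shows "regular (L1 \<union> L2)"
proof -
  have "range (contexts (L1 \<union> L2))
          \<subseteq> (\<lambda>(F, G) x y. F x y \<or> G x y) ` (range (contexts L1) \<times> range (contexts L2))"
    by (auto simp: contexts_def image_iff)
  then show ?thesis
    using assms unfolding regular_def by (meson finite_SigmaI finite_imageI finite_subset)
qed

lemma regular_Int:
  assumes "regular L1" and "regular L2"
  shows "regular (L1 \<inter> L2)"
proof -
  have "regular (- (- L1 \<union> - L2))"
    using assms by (intro regular_Compl regular_Un)
  then show ?thesis by simp
qed

definition letterwise_image :: "('a \<Rightarrow> 'b \<Rightarrow> bool) \<Rightarrow> 'a list set \<Rightarrow> 'b list set" where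
  "letterwise_image R L = {e. \<exists>e'\<in>L. list_all2 R e' e}"

lemma contexts_letterwise_image:
  "contexts (letterwise_image R L) u x y \<longleftrightarrow>
     (\<exists>u' x' y'. list_all2 R u' u \<and> list_all2 R x' x \<and> list_all2 R y' y \<and> contexts L u' x' y')"
proof
  assume "contexts (letterwise_image R L) u x y"
  then obtain e' where "e' \<in> L" and "list_all2 R e' (x @ u @ y)"
    unfolding contexts_def letterwise_image_def by blast
  then show "\<exists>u' x' y'. list_all2 R u' u \<and> list_all2 R x' x \<and> list_all2 R y' y \<and> contexts L u' x' y'"
    unfolding list_all2_append2 contexts_def by blast
next
  assume "\<exists>u' x' y'. list_all2 R u' u \<and> list_all2 R x' x \<and> list_all2 R y' y \<and> contexts L u' x' y'"
  then obtain u' x' y' where "list_all2 R (x' @ u' @ y') (x @ u @ y)" and "x' @ u' @ y' \<in> L"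
    unfolding contexts_def by (blast intro: list_all2_appendI)
  then show "contexts (letterwise_image R L) u x y"
    unfolding contexts_def letterwise_image_def by blast
qed

lemma regular_letterwise_image:
  assumes "regular L"
  shows "regular (letterwise_image R L)"
proof -
  define \<Phi> where "\<Phi> S x y = (\<exists>F\<in>S. \<exists>x' y'. list_all2 R x' x \<and> list_all2 R y' y \<and> F x' y')"
    for S x y
  have "contexts (letterwise_image R L) u = \<Phi> (contexts L ` {u'. list_all2 R u' u})" for u
    unfolding \<Phi>_def by (intro ext) (auto simp: contexts_letterwise_image)
  then have "range (contexts (letterwise_image R L)) \<subseteq> \<Phi> ` Pow (range (contexts L))"
    by blast
  then show ?thesis
    using assms unfolding regular_def by (meson finite_Pow_iff finite_imageI finite_subset)
qed

lemma regular_exists_letter: "regular {e. \<exists>c\<in>set e. P c}"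
proof (rule regularI)
  show "finite (range (\<lambda>u. \<exists>c\<in>set u. P c))" by simp
next
  fix u v :: "'a list"
  assume uv: "(\<exists>c\<in>set u. P c) = (\<exists>c\<in>set v. P c)"
  show "contexts {e. \<exists>c\<in>set e. P c} u = contexts {e. \<exists>c\<in>set e. P c} v"
    unfolding contexts_def mem_Collect_eq set_append bex_Un uv ..
qed

lemma regular_unique_letter: "regular {e. length (filter P e) = 1}"
proof (rule regularI)
  show "finite (range (\<lambda>u. min 2 (length (filter P u))))"
    by (rule finite_subset[of _ "{..2}"]) auto
next
  fix u v :: "'a list"
  assume "min 2 (length (filter P u)) = min 2 (length (filter P v))"
  then have "length (filter P u) = length (filter P v) \<or>
      2 \<le> length (filter P u) \<and> 2 \<le> length (filter P v)"
    by linarith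
  then show "contexts {e. length (filter P e) = 1} u = contexts {e. length (filter P e) = 1} v"
    by (auto simp: contexts_def fun_eq_iff)
qed

fun occurs_before :: "('a \<Rightarrow> bool) \<Rightarrow> ('a \<Rightarrow> bool) \<Rightarrow> 'a list \<Rightarrow> bool" where
  "occurs_before P Q [] = False"
| "occurs_before P Q (c # e) = (P c \<and> (\<exists>d\<in>set e. Q d) \<or> occurs_before P Q e)"

lemma occurs_before_append:
  "occurs_before P Q (a @ b) \<longleftrightarrow>
     occurs_before P Q a \<or> occurs_before P Q b \<or> (\<exists>c\<in>set a. P c) \<and> (\<exists>d\<in>set b. Q d)"
  by (induction a) auto

lemma occurs_before_iff_nth:
  "occurs_before P Q e \<longleftrightarrow> (\<exists>j<length e. \<exists>i<j. P (e ! i) \<and> Q (e ! j))"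
proof (induction e)
  case (Cons c e)
  have "(\<exists>j<length (c # e). \<exists>i<j. P ((c # e) ! i) \<and> Q ((c # e) ! j)) \<longleftrightarrow>
      (\<exists>j<length e. P c \<and> Q (e ! j)) \<or> (\<exists>j<length e. \<exists>i<j. P (e ! i) \<and> Q (e ! j))"
    by (auto simp: Ex_less_Suc2)
  also have "\<dots> \<longleftrightarrow> occurs_before P Q (c # e)"
    using Cons.IH by (auto simp: in_set_conv_nth) (metis nth_mem)
  finally show ?case ..
qed simp

lemma regular_occurs_before: "regular {e. occurs_before P Q e}"
proof (rule regularI)
  show "finite (range (\<lambda>u. ((\<exists>c\<in>set u. P c), (\<exists>c\<in>set u. Q c), occurs_before P Q u)))"
    by (rule finite_subset[of _ UNIV]) auto
qed (auto simp: contexts_def fun_eq_iff occurs_before_append)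

lemma contexts_replicate_periodic:
  assumes "regular L"
  obtains N p where "0 < p" and "\<And>k. contexts L (replicate (N + k * p) c) = contexts L (replicate N c)"
proof -
  have "finite (range (\<lambda>i. contexts L (replicate i c)))"
    using assms unfolding regular_def by (rule finite_subset[rotated]) auto
  then have "\<not> inj (\<lambda>i. contexts L (replicate i c))"
    using finite_imageD infinite_UNIV_nat by blast
  then obtain a b where "a < b" and ab: "contexts L (replicate a c) = contexts L (replicate b c)"
    unfolding inj_def by (metis linorder_neqE_nat)
  have "contexts L (replicate (a + k * (b - a)) c) = contexts L (replicate a c)" for k
  proof (induction k)
    case (Suc k)
    have "replicate (a + Suc k * (b - a)) c = replicate b c @ replicate (k * (b - a)) c"
      and "replicate (a + k * (b - a)) c = replicate a c @ replicate (k * (b - a)) c"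
      using \<open>a < b\<close> by (simp_all flip: replicate_add)
    then show ?case
      using Suc ab by (simp add: contexts_def fun_eq_iff)
  qed simp
  then show thesis
    using that[of "b - a" a] \<open>a < b\<close> by simp
qed

section \<open>Formulas define regular languages\<close>

text \<open>Buchi's encoding of an assignment: the letter at position \<open>i\<close> records the label of \<open>i\<close>,
the first-order variables assigned to \<open>i\<close> and the set variables containing \<open>i\<close>.\<close>

type_synonym letter = "nat \<times> nat set \<times> nat set"

definition annotate :: "nat list \<Rightarrow> (nat \<Rightarrow> nat) \<Rightarrow> (nat \<Rightarrow> nat set) \<Rightarrow> letter list" where
  "annotate w I J = map (\<lambda>i. (w ! i, {x. I x = i}, {X. i \<in> J X})) [0..<length w]"

fun agree_except_var :: "nat \<Rightarrow> letter \<Rightarrow> letter \<Rightarrow> bool" where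
  "agree_except_var x (a', V', W') (a, V, W) \<longleftrightarrow> a' = a \<and> V' - {x} = V - {x} \<and> W' = W"

fun agree_except_setvar :: "nat \<Rightarrow> letter \<Rightarrow> letter \<Rightarrow> bool" where
  "agree_except_setvar X (a', V', W') (a, V, W) \<longleftrightarrow> a' = a \<and> V' = V \<and> W' - {X} = W - {X}"

fun form_lang :: "form \<Rightarrow> letter list set" where
  "form_lang (Lab a x) = {e. \<exists>(b, V, W)\<in>set e. x \<in> V \<and> b = a}"
| "form_lang (Less x y) = {e. occurs_before (\<lambda>(_, V, _). x \<in> V) (\<lambda>(_, V, _). y \<in> V) e}"
| "form_lang (Eq x y) = {e. \<exists>(_, V, _)\<in>set e. x \<in> V \<and> y \<in> V}"
| "form_lang (Mem x X) = {e. \<exists>(_, V, W)\<in>set e. x \<in> V \<and> X \<in> W}"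
| "form_lang (Neg f) = - form_lang f"
| "form_lang (Or f g) = form_lang f \<union> form_lang g"
| "form_lang (Ex1 x f) = letterwise_image (agree_except_var x)
     (form_lang f \<inter> {e. length (filter (\<lambda>(_, V, _). x \<in> V) e) = 1})"
| "form_lang (Ex2 X f) = letterwise_image (agree_except_setvar X) (form_lang f)"

lemma regular_form_lang: "regular (form_lang f)"
  by (induction f) (simp_all only: form_lang.simps regular_exists_letter regular_occurs_before
      regular_unique_letter regular_Compl regular_Un regular_Int regular_letterwise_image)

lemma length_annotate [simp]: "length (annotate w I J) = length w"
  by (simp add: annotate_def)

lemma nth_annotate [simp]:
  "i < length w \<Longrightarrow> annotate w I J ! i = (w ! i, {x. I x = i}, {X. i \<in> J X})"
  by (simp add: annotate_def)

lemma bex_set_annotate: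
  "(\<exists>c\<in>set (annotate w I J). P c) \<longleftrightarrow> (\<exists>i<length w. P (w ! i, {x. I x = i}, {X. i \<in> J X}))"
  by (auto simp: annotate_def)

lemma length_filter_marked:
  "length (filter (\<lambda>(_, V, _). x \<in> V) e) = card {i. i < length e \<and> x \<in> fst (snd (e ! i))}"
  unfolding length_filter_conv_card by (simp add: split_beta)

lemma agree_except_var_annotate_iff:
  "list_all2 (agree_except_var x) e (annotate w I J) \<and> length (filter (\<lambda>(_, V, _). x \<in> V) e) = 1
     \<longleftrightarrow> (\<exists>p<length w. e = annotate w (I(x := p)) J)"
proof
  assume "list_all2 (agree_except_var x) e (annotate w I J) \<and>
    length (filter (\<lambda>(_, V, _). x \<in> V) e) = 1"
  then have rel: "list_all2 (agree_except_var x) e (annotate w I J)"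
    and one: "card {i. i < length e \<and> x \<in> fst (snd (e ! i))} = 1"
    by (simp_all only: length_filter_marked)
  from rel have len: "length e = length w"
    by (metis list_all2_lengthD length_annotate)
  from one obtain p where p: "{i. i < length e \<and> x \<in> fst (snd (e ! i))} = {p}"
    by (metis One_nat_def card_1_singleton_iff)
  have "e ! i = annotate w (I(x := p)) J ! i" if "i < length w" for i
  proof -
    obtain a V W where ei: "e ! i = (a, V, W)"
      by (cases "e ! i")
    have "agree_except_var x (e ! i) (annotate w I J ! i)"
      using list_all2_nthD[OF rel, of i] that len by simp
    then have agree: "a = w ! i" "V - {x} = {z. I z = i} - {x}" "W = {X. i \<in> J X}"
      using that ei by simp_all
    have "x \<in> V \<longleftrightarrow> i \<in> {i. i < length e \<and> x \<in> fst (snd (e ! i))}"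
      using that len ei by simp
    then have "x \<in> V \<longleftrightarrow> i = p"
      using p by simp
    then have "V = {z. (I(x := p)) z = i}"
      using agree(2) by (auto simp: set_eq_iff)
    then show ?thesis
      using that ei agree by simp
  qed
  then have "e = annotate w (I(x := p)) J"
    using len by (intro nth_equalityI) simp_all
  moreover have "p < length w"
    using p len by auto
  ultimately show "\<exists>p<length w. e = annotate w (I(x := p)) J"
    by blast
next
  assume "\<exists>p<length w. e = annotate w (I(x := p)) J"
  then obtain p where "p < length w" and e: "e = annotate w (I(x := p)) J"
    by blast
  then have "{i. i < length e \<and> x \<in> fst (snd (e ! i))} = {p}"
    by auto
  then have "length (filter (\<lambda>(_, V, _). x \<in> V) e) = 1"
    by (simp add: length_filter_marked)
  moreover have "list_all2 (agree_except_var x) e (annotate w I J)"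
    unfolding e by (auto simp: list_all2_conv_all_nth)
  ultimately show "list_all2 (agree_except_var x) e (annotate w I J) \<and>
    length (filter (\<lambda>(_, V, _). x \<in> V) e) = 1"
    by blast
qed

lemma agree_except_setvar_annotate_iff:
  "list_all2 (agree_except_setvar X) e (annotate w I J)
     \<longleftrightarrow> (\<exists>P\<subseteq>{0..<length w}. e = annotate w I (J(X := P)))"
proof
  assume rel: "list_all2 (agree_except_setvar X) e (annotate w I J)"
  from rel have len: "length e = length w"
    by (metis list_all2_lengthD length_annotate)
  define P where "P = {i. i < length w \<and> X \<in> snd (snd (e ! i))}"
  have "e ! i = annotate w I (J(X := P)) ! i" if "i < length w" for i
  proof -
    obtain a V W where ei: "e ! i = (a, V, W)"
      by (cases "e ! i")
    have "agree_except_setvar X (e ! i) (annotate w I J ! i)"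
      using list_all2_nthD[OF rel, of i] that len by simp
    then show ?thesis
      using that ei by (auto simp: P_def)
  qed
  then have "e = annotate w I (J(X := P))"
    using len by (intro nth_equalityI) simp_all
  moreover have "P \<subseteq> {0..<length w}"
    by (auto simp: P_def)
  ultimately show "\<exists>P\<subseteq>{0..<length w}. e = annotate w I (J(X := P))"
    by blast
next
  assume "\<exists>P\<subseteq>{0..<length w}. e = annotate w I (J(X := P))"
  then show "list_all2 (agree_except_setvar X) e (annotate w I J)"
    by (auto simp: list_all2_conv_all_nth)
qed

lemma annotate_in_form_lang_iff:
  assumes "\<forall>x\<in>fv1 f. I x < length w"
  shows "annotate w I J \<in> form_lang f \<longleftrightarrow> sat w I J f"
  using assms
proof (induction f arbitrary: I J)
  case (Less x y)
  have "(\<exists>j<length w. \<exists>i<j. x \<in> {z. I z = i} \<and> y \<in> {z. I z = j}) \<longleftrightarrow> I x < I y"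
    using Less by auto
  then show ?case
    by (simp add: occurs_before_iff_nth cong: conj_cong)
next
  case (Ex1 x f)
  have "annotate w I J \<in> form_lang (Ex1 x f) \<longleftrightarrow>
      (\<exists>e\<in>form_lang f. list_all2 (agree_except_var x) e (annotate w I J) \<and>
         length (filter (\<lambda>(_, V, _). x \<in> V) e) = 1)"
    by (auto simp: letterwise_image_def)
  also have "\<dots> \<longleftrightarrow> (\<exists>p<length w. annotate w (I(x := p)) J \<in> form_lang f)"
    unfolding agree_except_var_annotate_iff by blast
  also have "\<dots> \<longleftrightarrow> (\<exists>p<length w. sat w (I(x := p)) J f)"
    using Ex1 by (intro ex_cong1 conj_cong refl Ex1.IH) auto
  finally show ?case
    by simp
next
  case (Ex2 X f)
  have "annotate w I J \<in> form_lang (Ex2 X f) \<longleftrightarrow>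
      (\<exists>e\<in>form_lang f. list_all2 (agree_except_setvar X) e (annotate w I J))"
    by (auto simp: letterwise_image_def)
  also have "\<dots> \<longleftrightarrow> (\<exists>P\<subseteq>{0..<length w}. annotate w I (J(X := P)) \<in> form_lang f)"
    unfolding agree_except_setvar_annotate_iff by blast
  also have "\<dots> \<longleftrightarrow> (\<exists>P\<subseteq>{0..<length w}. sat w I (J(X := P)) f)"
    using Ex2 by (intro ex_cong1 conj_cong refl Ex2.IH) auto
  finally show ?case
    by simp
qed (auto simp: bex_set_annotate)

lemma sat_cong_fv1:
  assumes "\<forall>x\<in>fv1 f. I x = I' x"
  shows "sat w I J f \<longleftrightarrow> sat w I' J f"
  using assms
proof (induction f arbitrary: I I' J)
  case (Neg f)
  then show ?case
    by simp
next
  case (Or f g)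
  have "sat w I J f \<longleftrightarrow> sat w I' J f" and "sat w I J g \<longleftrightarrow> sat w I' J g"
    using Or.prems by (intro Or.IH; simp)+
  then show ?case
    by simp
next
  case (Ex1 x f)
  have "sat w (I(x := p)) J f \<longleftrightarrow> sat w (I'(x := p)) J f" for p
    using Ex1.prems by (intro Ex1.IH) auto
  then show ?case
    by simp
next
  case (Ex2 X f)
  have "sat w I (J(X := P)) f \<longleftrightarrow> sat w I' (J(X := P)) f" for P
    using Ex2.prems by (intro Ex2.IH) simp
  then show ?case
    by simp
qed auto

section \<open>Local access on blank strings\<close>

text \<open>The abstract position \<open>(j, d)\<close> stands for the position \<open>d\<close> steps to the right of the
\<open>j\<close>-th training example. On a blank string every label is \<open>0\<close>, and as long as the examples are
separated, no query reaches an end of the string or confuses two examples; so the run can be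
computed on abstract positions.\<close>

type_synonym abs_pos = "nat \<times> int"

definition first_index :: "'a list \<Rightarrow> 'a \<Rightarrow> nat" where
  "first_index xs a = (LEAST j. j < length xs \<and> xs ! j = a)"

definition abs_acquire :: "abs_pos list \<Rightarrow> abs_pos \<Rightarrow> abs_pos list \<times> answer" where
  "abs_acquire hs p = (if p \<in> set hs then (hs, APos (Some (first_index hs p)))
                        else (hs @ [p], APos (Some (length hs))))"

fun abs_respond :: "abs_pos list \<Rightarrow> action \<Rightarrow> abs_pos list \<times> answer" where
  "abs_respond hs (QLabel i) = (if i < length hs then (hs, ALabel 0) else (hs, AInvalid))"
| "abs_respond hs (QSucc i) =
     (if i < length hs then abs_acquire hs (fst (hs ! i), snd (hs ! i) + 1) else (hs, AInvalid))"
| "abs_respond hs (QPred i) =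
     (if i < length hs then abs_acquire hs (fst (hs ! i), snd (hs ! i) - 1) else (hs, AInvalid))"
| "abs_respond hs (Output f vs) = (hs, AInvalid)"

fun abs_exec :: "learner \<Rightarrow> (nat list \<times> bool) list \<Rightarrow> nat \<Rightarrow> abs_pos list \<Rightarrow> answer list
    \<Rightarrow> (form \<times> nat list \<times> abs_pos list) option" where
  "abs_exec L inp s hs hist =
     (case L inp hist of
        Output f hvs \<Rightarrow> Some (f, hvs, hs)
      | q \<Rightarrow> (case s of 0 \<Rightarrow> None
              | Suc s' \<Rightarrow> (let (hs', a) = abs_respond hs q in abs_exec L inp s' hs' (hist @ [a]))))"

declare exec.simps [simp del] abs_exec.simps [simp del]

lemma exec_Output: "L inp hist = Output f v \<Longrightarrow> exec w L inp s hs hist = Some (f, v, hs)"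
  by (subst exec.simps) simp

lemma exec_0: "\<nexists>f v. L inp hist = Output f v \<Longrightarrow> exec w L inp 0 hs hist = None"
  by (subst exec.simps) (cases "L inp hist"; simp)

lemma exec_Suc:
  "\<nexists>f v. L inp hist = Output f v \<Longrightarrow> respond w hs (L inp hist) = (hs', a) \<Longrightarrow>
     exec w L inp (Suc s) hs hist = exec w L inp s hs' (hist @ [a])"
  by (subst exec.simps) (cases "L inp hist"; simp)

lemma abs_exec_Output: "L inp hist = Output f v \<Longrightarrow> abs_exec L inp s hs hist = Some (f, v, hs)"
  by (subst abs_exec.simps) simp

lemma abs_exec_0: "\<nexists>f v. L inp hist = Output f v \<Longrightarrow> abs_exec L inp 0 hs hist = None"
  by (subst abs_exec.simps) (cases "L inp hist"; simp)

lemma abs_exec_Suc: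
  "\<nexists>f v. L inp hist = Output f v \<Longrightarrow> abs_respond hs (L inp hist) = (hs', a) \<Longrightarrow>
     abs_exec L inp (Suc s) hs hist = abs_exec L inp s hs' (hist @ [a])"
  by (subst abs_exec.simps) (cases "L inp hist"; simp)

lemma exec_add_steps:
  "exec w L inp s hs hist = Some r \<Longrightarrow> exec w L inp (s + k) hs hist = Some r"
proof (induction s arbitrary: hs hist)
  case 0
  then show ?case
    by (cases "\<exists>f v. L inp hist = Output f v") (auto simp: exec_Output exec_0)
next
  case (Suc s)
  show ?case
  proof (cases "\<exists>f v. L inp hist = Output f v")
    case True
    then show ?thesis
      using Suc.prems by (auto simp: exec_Output)
  next
    case False
    obtain hs' a where "respond w hs (L inp hist) = (hs', a)"
      by force
    then show ?thesis
      using Suc False by (simp add: exec_Suc)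
  qed
qed

lemma exec_Some_unique:
  "exec w L inp s hs hist = Some r \<Longrightarrow> exec w L inp s' hs hist = Some r' \<Longrightarrow> r = r'"
  by (metis exec_add_steps add.commute option.inject)

definition place :: "(nat \<Rightarrow> nat) \<Rightarrow> abs_pos \<Rightarrow> nat" where
  "place pos a = nat (int (pos (fst a)) + snd a)"

definition separated :: "(nat \<Rightarrow> nat) \<Rightarrow> nat \<Rightarrow> nat \<Rightarrow> nat set \<Rightarrow> bool" where
  "separated pos n K B \<longleftrightarrow> (\<forall>j\<in>B. K < pos j \<and> pos j + K + 1 < n) \<and>
     (\<forall>j\<in>B. \<forall>j'\<in>B. j \<noteq> j' \<longrightarrow> pos j + 2 * K + 2 < pos j' \<or> pos j' + 2 * K + 2 < pos j)"

definition offsets_within :: "nat set \<Rightarrow> nat \<Rightarrow> abs_pos list \<Rightarrow> bool" where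
  "offsets_within B D hs \<longleftrightarrow> (\<forall>(j, d)\<in>set hs. j \<in> B \<and> \<bar>d\<bar> \<le> int D)"

lemma offsets_within_mono: "offsets_within B D hs \<Longrightarrow> D \<le> D' \<Longrightarrow> offsets_within B D' hs"
  by (force simp: offsets_within_def)

lemma abs_respond_moves_by_one:
  assumes "abs_respond hs q = (hs', a)" and "(j, d') \<in> set hs'"
  obtains d where "(j, d) \<in> set hs" and "\<bar>d' - d\<bar> \<le> 1"
proof -
  have "(j, d') \<in> set hs \<or> (\<exists>i<length hs. j = fst (hs ! i) \<and> \<bar>d' - snd (hs ! i)\<bar> \<le> 1)"
    using assms by (cases q) (auto simp: abs_acquire_def split: if_splits)
  then show thesis
  proof
    assume "(j, d') \<in> set hs"
    then show thesis
      by (rule that) simp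
  next
    assume "\<exists>i<length hs. j = fst (hs ! i) \<and> \<bar>d' - snd (hs ! i)\<bar> \<le> 1"
    then obtain i where "i < length hs" "j = fst (hs ! i)" "\<bar>d' - snd (hs ! i)\<bar> \<le> 1"
      by blast
    moreover from this have "(j, snd (hs ! i)) \<in> set hs"
      by (metis nth_mem prod.collapse)
    ultimately show thesis
      using that by blast
  qed
qed

lemma offsets_within_abs_respond:
  assumes "offsets_within B D hs" and "abs_respond hs q = (hs', a)"
  shows "offsets_within B (Suc D) hs'"
  unfolding offsets_within_def
proof (clarify)
  fix j d'
  assume "(j, d') \<in> set hs'"
  then obtain d where "(j, d) \<in> set hs" and "\<bar>d' - d\<bar> \<le> 1"
    by (rule abs_respond_moves_by_one[OF assms(2)])
  then show "j \<in> B \<and> \<bar>d'\<bar> \<le> int (Suc D)"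
    using assms(1) by (auto simp: offsets_within_def)
qed

lemma offsets_within_abs_exec:
  "abs_exec L inp s hs hist = Some (f, hv, h) \<Longrightarrow> offsets_within B D hs \<Longrightarrow>
     offsets_within B (D + s) h"
proof (induction s arbitrary: D hs hist)
  case 0
  then show ?case
    by (cases "\<exists>f v. L inp hist = Output f v") (auto simp: abs_exec_Output abs_exec_0)
next
  case (Suc s)
  show ?case
  proof (cases "\<exists>f v. L inp hist = Output f v")
    case True
    then show ?thesis
      using Suc.prems by (auto simp: abs_exec_Output intro: offsets_within_mono)
  next
    case False
    obtain hs' a where r: "abs_respond hs (L inp hist) = (hs', a)"
      by force
    then have "abs_exec L inp s hs' (hist @ [a]) = Some (f, hv, h)"
      using Suc.prems(1) False by (simp add: abs_exec_Suc)
    then show ?thesis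
      using Suc.IH offsets_within_abs_respond[OF Suc.prems(2) r] by fastforce
  qed
qed

lemma inj_on_place:
  assumes "separated pos n K B"
  shows "inj_on (place pos) {(j, d). j \<in> B \<and> \<bar>d\<bar> \<le> int K}"
proof (rule inj_onI, clarify)
  fix j d j' d'
  assume j: "j \<in> B" "\<bar>d\<bar> \<le> int K" and j': "j' \<in> B" "\<bar>d'\<bar> \<le> int K"
    and eq: "place pos (j, d) = place pos (j', d')"
  have "K < pos j" "K < pos j'"
    using assms j j' by (auto simp: separated_def)
  then have "int (pos j) + d = int (pos j') + d'"
    using eq j j' by (simp add: place_def)
  moreover have "j \<noteq> j' \<Longrightarrow> pos j + 2 * K + 2 < pos j' \<or> pos j' + 2 * K + 2 < pos j"
    using assms j j' by (auto simp: separated_def)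
  ultimately show "j = j' \<and> d = d'"
    using j j' by (cases "j = j'") auto
qed

lemma place_less:
  "separated pos n K B \<Longrightarrow> fst a \<in> B \<Longrightarrow> \<bar>snd a\<bar> \<le> int K \<Longrightarrow> place pos a < n"
  by (auto simp: separated_def place_def)

lemma place_Suc:
  "separated pos n K B \<Longrightarrow> j \<in> B \<Longrightarrow> \<bar>d\<bar> < int K \<Longrightarrow>
     Suc (place pos (j, d)) = place pos (j, d + 1) \<and> place pos (j, d + 1) < n"
  by (auto simp: separated_def place_def)

lemma place_pred:
  "separated pos n K B \<Longrightarrow> j \<in> B \<Longrightarrow> \<bar>d\<bar> < int K \<Longrightarrow>
     0 < place pos (j, d) \<and> place pos (j, d) - 1 = place pos (j, d - 1)"
  by (auto simp: separated_def place_def)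

lemma handle_of_eq_first_index: "handle_of = first_index"
  by (simp add: fun_eq_iff handle_of_def first_index_def)

lemma first_index_nth:
  assumes "distinct xs" and "j < length xs"
  shows "first_index xs (xs ! j) = j"
  unfolding first_index_def
proof (rule Least_equality)
  fix k
  assume "k < length xs \<and> xs ! k = xs ! j"
  then show "j \<le> k"
    using assms nth_eq_iff_index_eq by fastforce
qed (use assms in simp)

lemma first_index_map:
  assumes "inj_on f (insert a (set xs))"
  shows "first_index (map f xs) (f a) = first_index xs a"
proof -
  have "j < length xs \<and> map f xs ! j = f a \<longleftrightarrow> j < length xs \<and> xs ! j = a" for j
    using assms by (auto simp: inj_on_def)
  then show ?thesis
    unfolding first_index_def by simp
qed

lemma acquire_map:
  assumes "inj_on f (insert p (set hs))"
  shows "acquire (map f hs) (f p) = apfst (map f) (abs_acquire hs p)"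
proof -
  have "f p \<in> set (map f hs) \<longleftrightarrow> p \<in> set hs"
    using assms by (auto simp: inj_on_def)
  then show ?thesis
    using first_index_map[OF assms]
    by (simp add: acquire_def abs_acquire_def handle_of_eq_first_index)
qed

lemma respond_blank_place:
  assumes sep: "separated pos n K B" and hs: "offsets_within B D hs" and "D < K"
    and r: "abs_respond hs q = (hs', a)"
  shows "respond (replicate n 0) (map (place pos) hs) q = (map (place pos) hs', a)"
proof -
  have inj: "inj_on (place pos) (insert p (set hs))" if "fst p \<in> B" "\<bar>snd p\<bar> \<le> int K" for p
    using that hs \<open>D < K\<close>
    by (intro inj_on_subset[OF inj_on_place[OF sep]]) (force simp: offsets_within_def)
  have nth_hs: "fst (hs ! i) \<in> B \<and> \<bar>snd (hs ! i)\<bar> < int K" if "i < length hs" for i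
  proof -
    have "(fst (hs ! i), snd (hs ! i)) \<in> set hs"
      using nth_mem[OF that] by simp
    then show ?thesis
      using hs \<open>D < K\<close> unfolding offsets_within_def by fastforce
  qed
  show ?thesis
  proof (cases q)
    case (QLabel i)
    then show ?thesis
      using r nth_hs place_less[OF sep, of "hs ! i"] by fastforce
  next
    case (QSucc i)
    show ?thesis
    proof (cases "i < length hs")
      case True
      note bounds = nth_hs[OF True]
      have "respond (replicate n 0) (map (place pos) hs) q =
          acquire (map (place pos) hs) (place pos (fst (hs ! i), snd (hs ! i) + 1))"
        using QSucc True place_Suc[OF sep bounds[THEN conjunct1] bounds[THEN conjunct2]] by simp
      also have "\<dots> = apfst (map (place pos)) (abs_acquire hs (fst (hs ! i), snd (hs ! i) + 1))"
        using bounds by (intro acquire_map inj) auto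
      also have "\<dots> = (map (place pos) hs', a)"
        using r QSucc True by simp
      finally show ?thesis .
    qed (use r QSucc in auto)
  next
    case (QPred i)
    show ?thesis
    proof (cases "i < length hs")
      case True
      note bounds = nth_hs[OF True]
      have "respond (replicate n 0) (map (place pos) hs) q =
          acquire (map (place pos) hs) (place pos (fst (hs ! i), snd (hs ! i) - 1))"
        using QPred True place_pred[OF sep bounds[THEN conjunct1] bounds[THEN conjunct2]] by simp
      also have "\<dots> = apfst (map (place pos)) (abs_acquire hs (fst (hs ! i), snd (hs ! i) - 1))"
        using bounds by (intro acquire_map inj) auto
      also have "\<dots> = (map (place pos) hs', a)"
        using r QPred True by simp
      finally show ?thesis .
    qed (use r QPred in auto)
  qed (use r in auto)
qed

lemma exec_blank_place:
  assumes "separated pos n K B" and "offsets_within B D hs" and "D + s \<le> K"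
  shows "exec (replicate n 0) L inp s (map (place pos) hs) hist =
    map_option (\<lambda>(f, hv, h). (f, hv, map (place pos) h)) (abs_exec L inp s hs hist)"
  using assms(2,3)
proof (induction s arbitrary: D hs hist)
  case 0
  then show ?case
    by (cases "\<exists>f v. L inp hist = Output f v") (auto simp: exec_Output abs_exec_Output exec_0 abs_exec_0)
next
  case (Suc s)
  show ?case
  proof (cases "\<exists>f v. L inp hist = Output f v")
    case True
    then show ?thesis
      by (auto simp: exec_Output abs_exec_Output)
  next
    case False
    obtain hs' a where r: "abs_respond hs (L inp hist) = (hs', a)"
      by force
    have "respond (replicate n 0) (map (place pos) hs) (L inp hist) = (map (place pos) hs', a)"
      using respond_blank_place[OF assms(1) Suc.prems(1) _ r] Suc.prems(2) by simp
    moreover have "offsets_within B (Suc D) hs'"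
      using offsets_within_abs_respond[OF Suc.prems(1) r] .
    ultimately show ?thesis
      using Suc.IH[of "Suc D" hs' "hist @ [a]"] Suc.prems(2) False
      by (simp add: exec_Suc abs_exec_Suc r)
  qed
qed

section \<open>Placements of the training examples\<close>

definition split_training :: "(nat \<Rightarrow> nat) \<Rightarrow> nat \<Rightarrow> (nat list \<times> bool) list" where
  "split_training pos m = map (\<lambda>j. ([pos j], j < m)) [0..<2 * m]"

definition block_starts :: "nat \<Rightarrow> abs_pos list" where
  "block_starts k = map (\<lambda>j. (j, 0)) [0..<k]"

lemma separated_inj_on:
  assumes "separated pos n K B"
  shows "inj_on pos B"
proof (rule inj_onI, rule ccontr)
  fix j j'
  assume "j \<in> B" "j' \<in> B" "pos j = pos j'" "j \<noteq> j'"
  then show False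
    using assms unfolding separated_def by fastforce
qed

lemma offsets_within_block_starts: "offsets_within {..<k} 0 (block_starts k)"
  by (auto simp: offsets_within_def block_starts_def)

lemma run_split_training:
  assumes "separated pos n K {..<2 * m}"
  shows "run (replicate n 0) L (split_training pos m) K =
    map_option (\<lambda>(f, hv, h). (f, hv, map (place pos) h))
      (abs_exec L (split_training id m) K (block_starts (2 * m)) [])"
proof -
  have distinct: "distinct (map pos [0..<2 * m])"
    using separated_inj_on[OF assms] by (simp add: distinct_map lessThan_atLeast0)
  then have held: "init_held (split_training pos m) = map pos [0..<2 * m]"
    by (simp add: init_held_def split_training_def concat_map_singleton comp_def)
  have "handle_of (map pos [0..<2 * m]) (pos j) = j" if "j < 2 * m" for j
    using first_index_nth[OF distinct, of j] that by (simp add: handle_of_eq_first_index)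
  then have "encode (split_training pos m) = split_training id m"
    unfolding encode_def held by (simp add: split_training_def)
  moreover have "map (place pos) (block_starts (2 * m)) = map pos [0..<2 * m]"
    by (simp add: block_starts_def place_def)
  ultimately show ?thesis
    unfolding run_def held using exec_blank_place[OF assms offsets_within_block_starts] by simp
qed

lemma training_set_split_training:
  assumes "inj_on pos {..<2 * m}" and "\<forall>j<2 * m. pos j < n"
  shows "distinct (split_training pos m)"
    and "training_set (replicate n 0) 1 (set (split_training pos m))"
    and "length (split_training pos m) = 2 * m"
proof -
  have "inj_on (\<lambda>j. ([pos j], j < m)) {..<2 * m}"
    using assms(1) by (auto simp: inj_on_def)
  then show "distinct (split_training pos m)"
    by (simp add: split_training_def distinct_map lessThan_atLeast0)
  show "training_set (replicate n 0) 1 (set (split_training pos m))"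
    using assms(2) by (auto simp: training_set_def split_training_def)
qed (simp add: split_training_def)

lemma phi_consistent_split_training:
  assumes "\<forall>j<2 * m. pos j < y \<longleftrightarrow> j < m" and "y < n"
  shows "phi_consistent (replicate n 0) (Less 0 1) 1 1 (set (split_training pos m))"
  unfolding phi_consistent_def
proof (intro exI[of _ "[y]"] conjI)
  show "consistent (replicate n 0) (Less 0 1) 1 [y] (set (split_training pos m))"
    using assms(1) by (auto simp: consistent_def split_training_def holds_def)
qed (use assms(2) in auto)

definition spread :: "(nat \<Rightarrow> nat) \<Rightarrow> nat \<Rightarrow> nat \<Rightarrow> nat \<Rightarrow> nat" where
  "spread rk base \<sigma> j = base + rk j * \<sigma>"

lemma separated_spread:
  assumes "\<forall>j<k. rk j < k" and "inj_on rk {..<k}"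
    and "K < base" and "2 * K + 2 < \<sigma>" and "base + (k - 1) * \<sigma> + K + 1 < n"
  shows "separated (spread rk base \<sigma>) n K {..<k}"
  unfolding separated_def spread_def
proof (intro conjI ballI impI)
  fix j
  assume "j \<in> {..<k}"
  then have "rk j * \<sigma> \<le> (k - 1) * \<sigma>"
    using assms(1) by (intro mult_le_mono1) fastforce
  then show "K < base + rk j * \<sigma>" and "base + rk j * \<sigma> + K + 1 < n"
    using assms(3,5) by linarith+
next
  fix j j'
  assume "j \<in> {..<k}" "j' \<in> {..<k}" "j \<noteq> j'"
  then have "rk j \<noteq> rk j'"
    using assms(2) by (meson inj_onD)
  moreover have "base + r * \<sigma> + 2 * K + 2 < base + r' * \<sigma>" if "r < r'" for r r'
  proof -
    have "Suc r * \<sigma> \<le> r' * \<sigma>"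
      using that by (intro mult_le_mono1) simp
    then show ?thesis
      using assms(4) by simp
  qed
  ultimately show "base + rk j * \<sigma> + 2 * K + 2 < base + rk j' * \<sigma> \<or>
      base + rk j' * \<sigma> + 2 * K + 2 < base + rk j * \<sigma>"
    by (meson linorder_neqE_nat)
qed

section \<open>Formulas do not see where a blank window is marked\<close>

lemma contexts_swap_padding:
  assumes "contexts L (replicate (N + D) c) = contexts L (replicate N c)"
  shows "x @ (replicate N c @ [d] @ replicate (N + D) c) @ y \<in> L \<longleftrightarrow>
    x @ (replicate (N + D) c @ [d] @ replicate N c) @ y \<in> L"
proof -
  have "x @ (replicate N c @ [d] @ replicate (N + D) c) @ y \<in> L \<longleftrightarrow>
      contexts L (replicate N c) x ([d] @ replicate (N + D) c @ y)"
    by (simp add: contexts_def)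
  also have "\<dots> \<longleftrightarrow> contexts L (replicate N c) (x @ replicate (N + D) c @ [d]) y"
    unfolding assms[symmetric] by (simp add: contexts_def)
  also have "\<dots> \<longleftrightarrow> x @ (replicate (N + D) c @ [d] @ replicate N c) @ y \<in> L"
    by (simp add: contexts_def)
  finally show ?thesis .
qed

lemma upt_split: "i \<le> j \<Longrightarrow> j \<le> k \<Longrightarrow> [i..<k] = [i..<j] @ [j..<k]"
  using upt_add_eq_append[of i j "k - j"] by simp

lemma map_upt_single_mark:
  assumes "a \<le> u" and "u < b" and "\<And>i. a \<le> i \<Longrightarrow> i < b \<Longrightarrow> f i = (if i = u then d else c)"
  shows "map f [a..<b] = replicate (u - a) c @ [d] @ replicate (b - Suc u) c"
proof -
  have "[a..<b] = [a..<u] @ [u] @ [Suc u..<b]"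
    using assms(1,2) upt_split[of a u b] by (simp add: upt_conv_Cons)
  moreover have "map f [a..<u] = map (\<lambda>_. c) [a..<u]" and "map f [Suc u..<b] = map (\<lambda>_. c) [Suc u..<b]"
    using assms by (auto intro!: map_cong)
  ultimately show ?thesis
    using assms by (simp add: map_replicate_const)
qed

text \<open>Variables beyond the parameters are sent to \<open>n\<close>, outside a string of length \<open>n\<close>, so that they
mark no position.\<close>

definition param_assignment :: "nat \<Rightarrow> nat list \<Rightarrow> nat \<Rightarrow> nat \<Rightarrow> nat" where
  "param_assignment n P v z = (if z = 0 then v else if z \<le> length P then P ! (z - 1) else n)"

lemma holds_blank_iff_annotate:
  assumes "fv1 f \<subseteq> {0..<Suc (length P)}" and "v < n" and "\<forall>q\<in>set P. q < n"
  shows "holds (replicate n 0) f 1 [v] P \<longleftrightarrow>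
    annotate (replicate n 0) (param_assignment n P v) (\<lambda>_. {}) \<in> form_lang f"
proof -
  have "holds (replicate n 0) f 1 [v] P \<longleftrightarrow> sat (replicate n 0) (param_assignment n P v) (\<lambda>_. {}) f"
    unfolding holds_def using assms(1) by (intro sat_cong_fv1) (auto simp: param_assignment_def)
  also have "\<dots> \<longleftrightarrow> annotate (replicate n 0) (param_assignment n P v) (\<lambda>_. {}) \<in> form_lang f"
    using assms by (intro annotate_in_form_lang_iff[symmetric]) (auto simp: param_assignment_def)
  finally show ?thesis .
qed

lemma annotate_blank_window:
  assumes "a \<le> b" and "b \<le> n" and "\<forall>q\<in>set P. q < a \<or> b \<le> q"
  obtains X Y where "\<And>v. a \<le> v \<Longrightarrow> v < b \<Longrightarrow>
    annotate (replicate n 0) (param_assignment n P v) (\<lambda>_. {}) =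
      X @ (replicate (v - a) (0, {}, {}) @ [(0, {0}, {})] @ replicate (b - Suc v) (0, {}, {})) @ Y"
proof -
  define letter_at where "letter_at v i = (0 :: nat, {z. param_assignment n P v z = i}, {} :: nat set)"
    for v i
  have outside: "letter_at v i = letter_at a i" if "a \<le> v" "i < a \<or> b \<le> i" "v < b" for v i
    using that by (auto simp: letter_at_def param_assignment_def)
  have window: "letter_at v i = (if i = v then (0, {0}, {}) else (0, {}, {}))"
    if "a \<le> i" "i < b" for v i
  proof -
    have "param_assignment n P v z = i \<longleftrightarrow> z = 0 \<and> i = v" for z
    proof (cases "z = 0")
      case False
      then have "z \<le> length P \<Longrightarrow> P ! (z - 1) \<in> set P"
        by simp
      then have "param_assignment n P v z < a \<or> b \<le> param_assignment n P v z"
        using False assms(2,3) by (auto simp: param_assignment_def)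
      then show ?thesis
        using that False by auto
    qed (auto simp: param_assignment_def)
    then show ?thesis
      by (auto simp: letter_at_def)
  qed
  show thesis
  proof (rule that[of "map (letter_at a) [0..<a]" "map (letter_at a) [b..<n]"])
    fix v
    assume v: "a \<le> v" "v < b"
    have "annotate (replicate n 0) (param_assignment n P v) (\<lambda>_. {}) =
        map (letter_at v) [0..<a] @ map (letter_at v) [a..<b] @ map (letter_at v) [b..<n]"
      using assms(1,2) upt_split[of 0 a n] upt_split[of a b n]
      by (simp add: annotate_def letter_at_def)
    moreover have "map (letter_at v) [a..<b] =
        replicate (v - a) (0, {}, {}) @ [(0, {0}, {})] @ replicate (b - Suc v) (0, {}, {})"
      using v by (intro map_upt_single_mark) (simp_all add: window)
    moreover have "map (letter_at v) [0..<a] = map (letter_at a) [0..<a]"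
      and "map (letter_at v) [b..<n] = map (letter_at a) [b..<n]"
      using v outside[of v] by (auto intro!: map_cong)
    ultimately show "annotate (replicate n 0) (param_assignment n P v) (\<lambda>_. {}) =
        map (letter_at a) [0..<a] @ (replicate (v - a) (0, {}, {}) @ [(0, {0}, {})] @
          replicate (b - Suc v) (0, {}, {})) @ map (letter_at a) [b..<n]"
      by (simp only:)
  qed
qed

lemma holds_blank_shift:
  assumes fv: "fv1 f \<subseteq> {0..<Suc (length P)}"
    and period: "contexts (form_lang f) (replicate (N + D) (0, {}, {})) =
      contexts (form_lang f) (replicate N (0, {}, {}))"
    and "N \<le> u" and "u + D + N < n"
    and far: "\<forall>q\<in>set P. q < n \<and> (q + N < u \<or> u + D + N < q)"
  shows "holds (replicate n 0) f 1 [u] P \<longleftrightarrow> holds (replicate n 0) f 1 [u + D] P"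
proof -
  define a b where "a = u - N" and "b = Suc (u + D + N)"
  have "a \<le> b" and "b \<le> n"
    using assms(4) by (simp_all add: a_def b_def)
  moreover have "\<forall>q\<in>set P. q < a \<or> b \<le> q"
    using far assms(3) by (auto simp: a_def b_def)
  ultimately obtain X Y where window: "\<And>v. a \<le> v \<Longrightarrow> v < b \<Longrightarrow>
    annotate (replicate n 0) (param_assignment n P v) (\<lambda>_. {}) =
      X @ (replicate (v - a) (0, {}, {}) @ [(0, {0}, {})] @ replicate (b - Suc v) (0, {}, {})) @ Y"
    by (rule annotate_blank_window) (rule that)
  have "a \<le> u" "u < b" "a \<le> u + D" "u + D < b"
    and "u - a = N" "b - Suc u = N + D" "u + D - a = N + D" "b - Suc (u + D) = N"
    using assms(3) by (simp_all add: a_def b_def)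
  then have "annotate (replicate n 0) (param_assignment n P u) (\<lambda>_. {}) =
      X @ (replicate N (0, {}, {}) @ [(0, {0}, {})] @ replicate (N + D) (0, {}, {})) @ Y"
    and "annotate (replicate n 0) (param_assignment n P (u + D)) (\<lambda>_. {}) =
      X @ (replicate (N + D) (0, {}, {}) @ [(0, {0}, {})] @ replicate N (0, {}, {})) @ Y"
    using window[of u] window[of "u + D"] by (simp_all only:)
  then have "annotate (replicate n 0) (param_assignment n P u) (\<lambda>_. {}) \<in> form_lang f \<longleftrightarrow>
      annotate (replicate n 0) (param_assignment n P (u + D)) (\<lambda>_. {}) \<in> form_lang f"
    using contexts_swap_padding[OF period] by (simp only:)
  moreover have "u < n" and "u + D < n" and "\<forall>q\<in>set P. q < n"
    using assms(4) far by auto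
  ultimately show ?thesis
    using holds_blank_iff_annotate[OF fv] by simp
qed

section \<open>The lower bound\<close>

lemma consistent_learner_any_run:
  assumes "consistent_learner \<Sigma> \<phi> k l L"
  obtains q' l' where "\<And>w ts s f hvs hs. set w \<subseteq> \<Sigma> \<Longrightarrow> distinct ts \<Longrightarrow> training_set w k (set ts) \<Longrightarrow>
      phi_consistent w \<phi> k l (set ts) \<Longrightarrow> run w L ts s = Some (f, hvs, hs) \<Longrightarrow>
      set hvs \<subseteq> {..<length hs} \<and> qr f \<le> q' \<and> length hvs \<le> l' \<and>
      wf_param_formula \<Sigma> f k (length hvs) \<and> consistent w f k (map ((!) hs) hvs) (set ts)"
proof -
  obtain q' l' where learner: "\<forall>w ts. set w \<subseteq> \<Sigma> \<longrightarrow> distinct ts \<longrightarrow> training_set w k (set ts) \<longrightarrow>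
      phi_consistent w \<phi> k l (set ts) \<longrightarrow>
      (\<exists>s f hvs hs. run w L ts s = Some (f, hvs, hs) \<and> set hvs \<subseteq> {..<length hs} \<and>
         qr f \<le> q' \<and> length hvs \<le> l' \<and> wf_param_formula \<Sigma> f k (length hvs) \<and>
         consistent w f k (map ((!) hs) hvs) (set ts))"
    using assms unfolding consistent_learner_def by blast
  show thesis
  proof (rule that)
    fix w ts s f hvs hs
    assume "set w \<subseteq> \<Sigma>" "distinct ts" "training_set w k (set ts)" "phi_consistent w \<phi> k l (set ts)"
      and run: "run w L ts s = Some (f, hvs, hs)"
    then obtain s' f' hvs' hs' where run': "run w L ts s' = Some (f', hvs', hs')"
      and "set hvs' \<subseteq> {..<length hs'} \<and> qr f' \<le> q' \<and> length hvs' \<le> l' \<and>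
        wf_param_formula \<Sigma> f' k (length hvs') \<and> consistent w f' k (map ((!) hs') hvs') (set ts)"
      using learner by blast
    moreover have "(f, hvs, hs) = (f', hvs', hs')"
      using exec_Some_unique run run' unfolding run_def by blast
    ultimately show "set hvs \<subseteq> {..<length hs} \<and> qr f \<le> q' \<and> length hvs \<le> l' \<and>
      wf_param_formula \<Sigma> f k (length hvs) \<and> consistent w f k (map ((!) hs) hvs) (set ts)"
      by simp
  qed
qed

lemma sublinear_learner_short_run:
  assumes "sublinear_learner \<Sigma> k L" and "0 < c"
  obtains S n where "S * c + c < n"
    and "\<And>w ts. set w \<subseteq> \<Sigma> \<Longrightarrow> length w = n \<Longrightarrow> distinct ts \<Longrightarrow> length ts \<le> t \<Longrightarrow>
      training_set w k (set ts) \<Longrightarrow> run w L ts S \<noteq> None"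
proof -
  obtain g :: "nat \<Rightarrow> real" where g: "(\<lambda>n. g n / real n) \<longlonglongrightarrow> 0"
    and time: "\<forall>w ts. set w \<subseteq> \<Sigma> \<longrightarrow> distinct ts \<longrightarrow> length ts \<le> t \<longrightarrow> training_set w k (set ts) \<longrightarrow>
      run w L ts (nat \<lfloor>g (length w)\<rfloor>) \<noteq> None"
    using assms(1) unfolding sublinear_learner_def by blast
  have "eventually (\<lambda>n. g n / real n < 1 / real (2 * c)) sequentially"
    using g by (rule order_tendstoD) (use assms(2) in simp)
  moreover have "eventually (\<lambda>n. 2 * c < n) sequentially"
    by (rule eventually_gt_at_top)
  ultimately have "eventually (\<lambda>n. g n / real n < 1 / real (2 * c) \<and> 2 * c < n) sequentially"
    by (rule eventually_conj)
  then obtain n where small: "g n / real n < 1 / real (2 * c)" and big: "2 * c < n"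
    unfolding eventually_sequentially by blast
  have "g n * real c < real n / 2"
    using small big assms(2) by (simp add: field_simps)
  moreover have "real (nat \<lfloor>g n\<rfloor>) * real c \<le> max 0 (g n) * real c"
    by (intro mult_right_mono) linarith+
  ultimately have "real (nat \<lfloor>g n\<rfloor> * c) < real n / 2"
    using big by (simp add: max_def split: if_splits)
  then have "nat \<lfloor>g n\<rfloor> * c + c < n"
    using big by linarith
  then show thesis
    using that[of "nat \<lfloor>g n\<rfloor>" n] time by blast
qed

lemma place_spread_outside_window:
  assumes "\<bar>snd a\<bar> \<le> int K" and "K < base" and "K + N < \<sigma>"
    and "rk (fst a) \<noteq> r0" and "rk (fst a) \<noteq> Suc r0"
  shows "place (spread rk base \<sigma>) a + N < base + r0 * \<sigma> \<or>
    base + Suc r0 * \<sigma> + N < place (spread rk base \<sigma>) a"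
proof -
  define q r d where "q = place (spread rk base \<sigma>) a" and "r = rk (fst a)" and "d = snd a"
  have "0 \<le> int base + int (r * \<sigma>) + d"
    using assms(1,2) unfolding d_def by linarith
  then have q: "int q = int base + int (r * \<sigma>) + d"
    by (simp add: q_def r_def d_def place_def spread_def)
  show ?thesis
  proof (cases "r < r0")
    case True
    then have "r * \<sigma> + \<sigma> \<le> r0 * \<sigma>"
      using mult_le_mono1[of "Suc r" r0 \<sigma>] by simp
    then have "q + N < base + r0 * \<sigma>"
      using q assms(1,3) unfolding d_def by linarith
    then show ?thesis
      unfolding q_def ..
  next
    case False
    then have "r0 * \<sigma> + 2 * \<sigma> \<le> r * \<sigma>"
      using assms(4,5) mult_le_mono1[of "Suc (Suc r0)" r \<sigma>] by (simp add: r_def)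
    then have "base + (r0 * \<sigma> + \<sigma>) + N < q"
      using q assms(1,3) unfolding d_def by linarith
    then show ?thesis
      by (simp add: q_def)
  qed
qed

lemma split_permutation_to_middle:
  fixes i0 j0 m :: nat
  assumes "i0 < m" and "m \<le> j0" and "j0 < 2 * m"
  obtains rk where "\<forall>j<2 * m. rk j < 2 * m \<and> (rk j < m \<longleftrightarrow> j < m)" and "inj_on rk {..<2 * m}"
    and "rk i0 = m - 1" and "rk j0 = m"
proof
  define rk where "rk j = (if j = i0 then m - 1 else if j = m - 1 then i0
      else if j = j0 then m else if j = m then j0 else j)" for j
  show "\<forall>j<2 * m. rk j < 2 * m \<and> (rk j < m \<longleftrightarrow> j < m)" "rk i0 = m - 1" "rk j0 = m"
    using assms by (auto simp: rk_def)
  have "rk (rk j) = j" for j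
    using assms by (auto simp: rk_def)
  then show "inj_on rk {..<2 * m}"
    by (metis inj_onI)
qed

definition admissible_spread :: "nat \<Rightarrow> nat \<Rightarrow> nat \<Rightarrow> (nat \<Rightarrow> nat) \<Rightarrow> nat \<Rightarrow> nat \<Rightarrow> bool" where
  "admissible_spread m K n rk base \<sigma> \<longleftrightarrow>
     (\<forall>j<2 * m. rk j < 2 * m \<and> (rk j < m \<longleftrightarrow> j < m)) \<and> inj_on rk {..<2 * m} \<and>
     K < base \<and> 2 * K + 2 < \<sigma> \<and> base + (2 * m - 1) * \<sigma> + K + 1 < n"

lemma admissible_spread_split_training:
  assumes "admissible_spread m K n rk base \<sigma>"
  shows "separated (spread rk base \<sigma>) n K {..<2 * m}"
    and "distinct (split_training (spread rk base \<sigma>) m)"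
    and "training_set (replicate n 0) 1 (set (split_training (spread rk base \<sigma>) m))"
    and "length (split_training (spread rk base \<sigma>) m) = 2 * m"
    and "phi_consistent (replicate n 0) (Less 0 1) 1 1 (set (split_training (spread rk base \<sigma>) m))"
proof -
  note rk = assms[unfolded admissible_spread_def, THEN conjunct1]
    assms[unfolded admissible_spread_def, THEN conjunct2, THEN conjunct1]
  note K = assms[unfolded admissible_spread_def, THEN conjunct2, THEN conjunct2]
  show sep: "separated (spread rk base \<sigma>) n K {..<2 * m}"
    using rk K by (intro separated_spread) auto
  have "\<forall>j<2 * m. spread rk base \<sigma> j < n"
    using sep unfolding separated_def by (metis Suc_lessD add_lessD1 lessThan_iff)
  then show "distinct (split_training (spread rk base \<sigma>) m)"
    and "training_set (replicate n 0) 1 (set (split_training (spread rk base \<sigma>) m))"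
    and "length (split_training (spread rk base \<sigma>) m) = 2 * m"
    using training_set_split_training[OF separated_inj_on[OF sep]] by auto
  have "m * \<sigma> \<le> (2 * m - 1) * \<sigma>"
    by (intro mult_le_mono1) simp
  then have "base + m * \<sigma> < n"
    using K by linarith
  moreover have "\<forall>j<2 * m. spread rk base \<sigma> j < base + m * \<sigma> \<longleftrightarrow> j < m"
    using rk K by (auto simp: spread_def)
  ultimately show "phi_consistent (replicate n 0) (Less 0 1) 1 1 (set (split_training (spread rk base \<sigma>) m))"
    by (intro phi_consistent_split_training)
qed

lemma adjacent_spread:
  fixes i0 j0 m K N p :: nat
  assumes "i0 < m" and "m \<le> j0" and "j0 < 2 * m" and "0 < p"
  obtains rk base \<sigma> n
  where "admissible_spread m K n rk base \<sigma>" and "p dvd \<sigma>"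
    and "N \<le> spread rk base \<sigma> i0" and "spread rk base \<sigma> j0 = spread rk base \<sigma> i0 + \<sigma>"
    and "spread rk base \<sigma> j0 + N < n"
    and "\<And>a. fst a < 2 * m \<Longrightarrow> fst a \<noteq> i0 \<Longrightarrow> fst a \<noteq> j0 \<Longrightarrow> \<bar>snd a\<bar> \<le> int K \<Longrightarrow>
      place (spread rk base \<sigma>) a + N < spread rk base \<sigma> i0 \<or>
      spread rk base \<sigma> j0 + N < place (spread rk base \<sigma>) a"
proof -
  obtain rk where rk: "\<forall>j<2 * m. rk j < 2 * m \<and> (rk j < m \<longleftrightarrow> j < m)" "inj_on rk {..<2 * m}"
    and middle: "rk i0 = m - 1" "rk j0 = m"
    using split_permutation_to_middle[OF assms(1-3)] by blast
  define \<sigma> base n where "\<sigma> = (2 * K + N + 3) * p" and "base = K + N + 1"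
    and "n = base + 2 * m * \<sigma> + K + N + 2"
  have \<sigma>: "2 * K + N + 3 \<le> \<sigma>"
    using assms(4) by (simp add: \<sigma>_def)
  have "(2 * m - 1) * \<sigma> \<le> 2 * m * \<sigma>" and "m * \<sigma> \<le> 2 * m * \<sigma>"
    by (intro mult_le_mono1; simp)+
  note bounds = this
  have m: "Suc (m - 1) = m"
    using assms(1) by simp
  show thesis
  proof (rule that[of n rk base \<sigma>])
    have "base + (2 * m - 1) * \<sigma> + K + 1 < n"
      using bounds unfolding n_def by linarith
    then show "admissible_spread m K n rk base \<sigma>"
      unfolding admissible_spread_def using rk \<sigma> by (simp add: base_def)
    show "p dvd \<sigma>"
      by (simp add: \<sigma>_def)
    show "N \<le> spread rk base \<sigma> i0"
      by (simp add: spread_def base_def)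
    show "spread rk base \<sigma> j0 = spread rk base \<sigma> i0 + \<sigma>"
      using middle m mult_Suc[of "m - 1" \<sigma>] by (simp add: spread_def)
    show "spread rk base \<sigma> j0 + N < n"
      using middle(2) bounds unfolding n_def spread_def by simp
  next
    fix a :: abs_pos
    assume a: "fst a < 2 * m" "fst a \<noteq> i0" "fst a \<noteq> j0" "\<bar>snd a\<bar> \<le> int K"
    then have "rk (fst a) \<noteq> rk i0" and "rk (fst a) \<noteq> rk j0"
      using inj_onD[OF rk(2), of "fst a" i0] inj_onD[OF rk(2), of "fst a" j0] assms(1-3) by auto
    then have "rk (fst a) \<noteq> m - 1" and "rk (fst a) \<noteq> Suc (m - 1)"
      using middle m by simp_all
    moreover have "K < base" and "K + N < \<sigma>"
      using \<sigma> by (simp_all add: base_def)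
    ultimately have "place (spread rk base \<sigma>) a + N < base + (m - 1) * \<sigma> \<or>
        base + Suc (m - 1) * \<sigma> + N < place (spread rk base \<sigma>) a"
      using a(4) by (intro place_spread_outside_window)
    then show "place (spread rk base \<sigma>) a + N < spread rk base \<sigma> i0 \<or>
        spread rk base \<sigma> j0 + N < place (spread rk base \<sigma>) a"
      using middle m by (simp add: spread_def)
  qed
qed

lemma unused_blocks:
  assumes "length hvs < m"
  obtains i0 j0 where "i0 < m" and "m \<le> j0" and "j0 < 2 * m"
    and "\<forall>h\<in>set hvs. fst (hs ! h) \<noteq> i0 \<and> fst (hs ! h) \<noteq> j0"
proof -
  define A where "A = (\<lambda>h. fst (hs ! h)) ` set hvs"
  have "card A \<le> length hvs"
    unfolding A_def using card_image_le[of "set hvs"] card_length[of hvs] le_trans by blast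
  have "\<not> B \<subseteq> A" if "card B = m" for B
  proof
    assume "B \<subseteq> A"
    then have "card B \<le> card A"
      by (rule card_mono[rotated]) (simp add: A_def)
    then show False
      using that \<open>card A \<le> length hvs\<close> assms by simp
  qed
  then have "\<not> {..<m} \<subseteq> A" and "\<not> {m..<2 * m} \<subseteq> A"
    by simp_all
  then obtain i0 j0 where "i0 < m" "i0 \<notin> A" and "m \<le> j0" "j0 < 2 * m" "j0 \<notin> A"
    unfolding subset_eq by auto
  then show thesis
    using that[of i0 j0] by (auto simp: A_def)
qed

lemma adjacent_blocks_indistinguishable:
  assumes fv: "fv1 f \<subseteq> {0..<Suc (length hvs)}" and hvs: "set hvs \<subseteq> {..<length hs}"
    and hs: "offsets_within {..<2 * m} K hs"
    and blocks: "i0 < m" "m \<le> j0" "j0 < 2 * m"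
    and unused: "\<forall>h\<in>set hvs. fst (hs ! h) \<noteq> i0 \<and> fst (hs ! h) \<noteq> j0"
  obtains n rk base \<sigma> where "admissible_spread m K n rk base \<sigma>"
    and "holds (replicate n 0) f 1 [spread rk base \<sigma> i0] (map (place (spread rk base \<sigma>) \<circ> (!) hs) hvs)
      \<longleftrightarrow> holds (replicate n 0) f 1 [spread rk base \<sigma> j0] (map (place (spread rk base \<sigma>) \<circ> (!) hs) hvs)"
proof -
  obtain N p where "0 < p"
    and period: "\<And>k. contexts (form_lang f) (replicate (N + k * p) (0, {}, {})) =
      contexts (form_lang f) (replicate N (0, {}, {}))"
    using contexts_replicate_periodic[OF regular_form_lang[of f], where c = "(0, {}, {})"] by blast
  obtain n rk base \<sigma> where admissible: "admissible_spread m K n rk base \<sigma>"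
    and "p dvd \<sigma>" and "N \<le> spread rk base \<sigma> i0"
    and adjacent: "spread rk base \<sigma> j0 = spread rk base \<sigma> i0 + \<sigma>"
    and "spread rk base \<sigma> j0 + N < n"
    and far: "\<And>a. fst a < 2 * m \<Longrightarrow> fst a \<noteq> i0 \<Longrightarrow> fst a \<noteq> j0 \<Longrightarrow> \<bar>snd a\<bar> \<le> int K \<Longrightarrow>
      place (spread rk base \<sigma>) a + N < spread rk base \<sigma> i0 \<or>
      spread rk base \<sigma> j0 + N < place (spread rk base \<sigma>) a"
    by (rule adjacent_spread[OF blocks \<open>0 < p\<close>, where K = K and N = N]) (rule that)
  define pos where "pos = spread rk base \<sigma>"
  define P where "P = map (place pos \<circ> (!) hs) hvs"
  have "holds (replicate n 0) f 1 [pos i0] P \<longleftrightarrow> holds (replicate n 0) f 1 [pos i0 + \<sigma>] P"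
  proof (rule holds_blank_shift)
    show "fv1 f \<subseteq> {0..<Suc (length P)}"
      using fv by (simp add: P_def)
    obtain k where "\<sigma> = k * p"
      using \<open>p dvd \<sigma>\<close> by (metis dvd_def mult.commute)
    then show "contexts (form_lang f) (replicate (N + \<sigma>) (0, {}, {})) =
        contexts (form_lang f) (replicate N (0, {}, {}))"
      using period by simp
    show "N \<le> pos i0" and "pos i0 + \<sigma> + N < n"
      using \<open>N \<le> spread rk base \<sigma> i0\<close> \<open>spread rk base \<sigma> j0 + N < n\<close> adjacent
      by (simp_all add: pos_def)
    have sep: "separated pos n K {..<2 * m}"
      unfolding pos_def by (rule admissible_spread_split_training(1)[OF admissible])
    show "\<forall>q\<in>set P. q < n \<and> (q + N < pos i0 \<or> pos i0 + \<sigma> + N < q)"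
    proof
      fix q
      assume "q \<in> set P"
      then obtain h where h: "h \<in> set hvs" and q: "q = place pos (hs ! h)"
        by (auto simp: P_def)
      then have "(fst (hs ! h), snd (hs ! h)) \<in> set hs"
        using hvs by auto
      then have "fst (hs ! h) < 2 * m" "\<bar>snd (hs ! h)\<bar> \<le> int K"
        using hs unfolding offsets_within_def by fastforce+
      then show "q < n \<and> (q + N < pos i0 \<or> pos i0 + \<sigma> + N < q)"
        using place_less[OF sep] far[of "hs ! h"] unused h adjacent q by (simp add: pos_def)
    qed
  qed
  then show thesis
    using that[OF admissible] adjacent by (simp add: pos_def P_def)
qed

lemma consistent_on_spreads_needs_parameters:
  assumes fv: "fv1 f \<subseteq> {0..<Suc (length hvs)}"
    and hvs: "set hvs \<subseteq> {..<length hs}"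
    and hs: "offsets_within {..<2 * m} K hs"
    and consistent: "\<And>rk base \<sigma> n. admissible_spread m K n rk base \<sigma> \<Longrightarrow>
      consistent (replicate n 0) f 1 (map (place (spread rk base \<sigma>) \<circ> (!) hs) hvs)
        (set (split_training (spread rk base \<sigma>) m))"
  shows "m \<le> length hvs"
proof (rule ccontr)
  assume "\<not> m \<le> length hvs"
  then obtain i0 j0 where blocks: "i0 < m" "m \<le> j0" "j0 < 2 * m"
    and unused: "\<forall>h\<in>set hvs. fst (hs ! h) \<noteq> i0 \<and> fst (hs ! h) \<noteq> j0"
    by (rule unused_blocks[of hvs m hs, OF not_le_imp_less]) (rule that)
  obtain n rk base \<sigma> where admissible: "admissible_spread m K n rk base \<sigma>"
    and same: "holds (replicate n 0) f 1 [spread rk base \<sigma> i0] (map (place (spread rk base \<sigma>) \<circ> (!) hs) hvs)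
      \<longleftrightarrow> holds (replicate n 0) f 1 [spread rk base \<sigma> j0] (map (place (spread rk base \<sigma>) \<circ> (!) hs) hvs)"
    by (rule adjacent_blocks_indistinguishable[OF fv hvs hs blocks unused]) (rule that)
  have "([spread rk base \<sigma> i0], True) \<in> set (split_training (spread rk base \<sigma>) m)"
    and "([spread rk base \<sigma> j0], False) \<in> set (split_training (spread rk base \<sigma>) m)"
    using blocks by (force simp: split_training_def)+
  then show False
    using consistent[OF admissible] same unfolding consistent_def by fastforce
qed

lemma sublinear_learner_halts_on_spread:
  assumes "sublinear_learner {0} 1 L" and "0 < m"
  obtains S n where "admissible_spread m S n id (S + 1) (2 * S + 3)"
    and "run (replicate n 0) L (split_training (spread id (S + 1) (2 * S + 3)) m) S \<noteq> None"
proof -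
  have "0 < 6 * m"
    using assms(2) by simp
  obtain S n where room: "S * (6 * m) + 6 * m < n"
    and fast: "\<And>w ts. set w \<subseteq> {0} \<Longrightarrow> length w = n \<Longrightarrow> distinct ts \<Longrightarrow> length ts \<le> 2 * m \<Longrightarrow>
      training_set w 1 (set ts) \<Longrightarrow> run w L ts S \<noteq> None"
    using sublinear_learner_short_run[OF assms(1) \<open>0 < 6 * m\<close>, where t = "2 * m"] by metis
  have "(2 * m - 1) * (2 * S + 3) + (2 * S + 3) = 4 * (m * S) + 6 * m"
    using assms(2) by (cases m) (simp_all add: algebra_simps)
  moreover have "S * (6 * m) = 6 * (m * S)"
    by simp
  ultimately have "S + 1 + (2 * m - 1) * (2 * S + 3) + S + 1 < n"
    using room by linarith
  then have spread: "admissible_spread m S n id (S + 1) (2 * S + 3)"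
    by (simp add: admissible_spread_def)
  note valid = admissible_spread_split_training[OF spread]
  have "set (replicate n 0) \<subseteq> {0 :: nat}"
    by (simp add: set_replicate_conv_if)
  then have "run (replicate n 0) L (split_training (spread id (S + 1) (2 * S + 3)) m) S \<noteq> None"
    using fast[OF _ _ valid(2) _ valid(3)] valid(4) by simp
  with spread show thesis
    by (rule that)
qed

lemma no_sublinear_consistent_learner_Less:
  assumes "consistent_learner {0} (Less 0 1) 1 1 L" and "sublinear_learner {0} 1 L"
  shows False
proof -
  obtain q' l' where correct: "\<And>w ts s f hvs hs. set w \<subseteq> {0} \<Longrightarrow> distinct ts \<Longrightarrow>
      training_set w 1 (set ts) \<Longrightarrow> phi_consistent w (Less 0 1) 1 1 (set ts) \<Longrightarrow>
      run w L ts s = Some (f, hvs, hs) \<Longrightarrow>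
      set hvs \<subseteq> {..<length hs} \<and> qr f \<le> q' \<and> length hvs \<le> l' \<and>
      wf_param_formula {0} f 1 (length hvs) \<and> consistent w f 1 (map ((!) hs) hvs) (set ts)"
    using consistent_learner_any_run[OF assms(1)] by blast
  define m where "m = Suc l'"
  obtain S n where spread1: "admissible_spread m S n id (S + 1) (2 * S + 3)"
    and "run (replicate n 0) L (split_training (spread id (S + 1) (2 * S + 3)) m) S \<noteq> None"
    by (rule sublinear_learner_halts_on_spread[OF assms(2), of m]) (simp_all add: m_def that)
  then obtain f hvs hs
    where abs_run: "abs_exec L (split_training id m) S (block_starts (2 * m)) [] = Some (f, hvs, hs)"
    unfolding run_split_training[OF admissible_spread_split_training(1)[OF spread1]]
    by (cases "abs_exec L (split_training id m) S (block_starts (2 * m)) []") auto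
  have blank: "set (replicate k 0) \<subseteq> {0 :: nat}" for k
    by (simp add: set_replicate_conv_if)
  have learned: "set hvs \<subseteq> {..<length hs} \<and> length hvs \<le> l' \<and> wf_param_formula {0} f 1 (length hvs) \<and>
      consistent (replicate n' 0) f 1 (map ((!) (map (place (spread rk base \<sigma>)) hs)) hvs)
        (set (split_training (spread rk base \<sigma>) m))"
    if "admissible_spread m S n' rk base \<sigma>" for n' rk base \<sigma>
  proof -
    note valid = admissible_spread_split_training[OF that]
    have "run (replicate n' 0) L (split_training (spread rk base \<sigma>) m) S =
        Some (f, hvs, map (place (spread rk base \<sigma>)) hs)"
      using run_split_training[OF valid(1)] abs_run by simp
    from correct[OF blank valid(2,3,5) this] show ?thesis
      by simp
  qed
  have "m \<le> length hvs"
  proof (rule consistent_on_spreads_needs_parameters)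
    show "fv1 f \<subseteq> {0..<Suc (length hvs)}" and hvs: "set hvs \<subseteq> {..<length hs}"
      using learned[OF spread1] by (auto simp: wf_param_formula_def)
    show "offsets_within {..<2 * m} S hs"
      using offsets_within_abs_exec[OF abs_run offsets_within_block_starts] by simp
    show "consistent (replicate n' 0) f 1 (map (place (spread rk base \<sigma>) \<circ> (!) hs) hvs)
        (set (split_training (spread rk base \<sigma>) m))"
      if "admissible_spread m S n' rk base \<sigma>" for n' rk base \<sigma>
    proof -
      have "map ((!) (map (place (spread rk base \<sigma>)) hs)) hvs = map (place (spread rk base \<sigma>) \<circ> (!) hs) hvs"
        using hvs by (auto intro!: map_cong)
      with learned[OF that] show ?thesis
        by metis
    qed
  qed
  then show False
    using learned[OF spread1] by (simp add: m_def)
qed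

theorem theorem2:
  shows "\<exists>\<Sigma> :: nat set. finite \<Sigma> \<and>
           (\<exists>\<phi> l. is_FO \<phi> \<and> wf_param_formula \<Sigma> \<phi> 1 l \<and>
              \<not> (\<exists>L. consistent_learner \<Sigma> \<phi> 1 l L \<and> sublinear_learner \<Sigma> 1 L))"
proof (intro exI conjI)
  show "finite {0 :: nat}"
    by simp
  show "is_FO (Less 0 1)"
    by simp
  show "wf_param_formula {0} (Less 0 1) 1 1"
    by (auto simp: wf_param_formula_def)
  show "\<not> (\<exists>L. consistent_learner {0} (Less 0 1) 1 1 L \<and> sublinear_learner {0} 1 L)"
    using no_sublinear_consistent_learner_Less by blast
qed

end
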